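(* Let $a,b>0$, $0<\alpha<1$, $0<A<1$, $B>0$ and $\beta=A+iB$. Define for $\omega>0$ $$\hat E(\omega)=a(i\omega)^{\alpha}+b\big((i\omega)^{\beta}+(i\omega)^{\bar\beta}\big).$$ (i) If $\operatorname{Re}\hat E(\omega)\ge0$ and $\operatorname{Im}\hat E(\omega)\ge 0$ for all $\omega>0$, then $A=\alpha$. (ii) If $A=\alpha$, then $\operatorname{Re}\hat E(\omega)\ge0$ and $\operatorname{Im}\hat E(\omega)\ge 0$ for all $\omega>0$ if and only if $$a\ge 2b\cosh\frac{B\pi}{2}\sqrt{1+\Big(\cot\frac{\alpha\pi}{2}\tanh\frac{B\pi}{2}\Big)^2}\quad\text{when }\alpha\in(0,\tfrac12],$$ $$a\ge 2b\cosh\frac{B\pi}{2}\sqrt{1+\Big(\tan\frac{\alpha\pi}{2}\tanh\frac{B\pi}{2}\Big)^2}\quad\text{when }\alpha\in[\tfrac12,1).$$ In particular these conditions imply $a\ge 2b$.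
   Context: For $\omega>0$ and $\gamma\in\mathbb C$, $(i\omega)^\gamma=\omega^\gamma e^{i\gamma\pi/2}$ with $\omega^\gamma=e^{\gamma\ln\omega}$ (principal branch). *)

theory Defs
  imports "HOL-Analysis.Analysis"
begin

text \<open>(i omega) powered to gamma, for omega > 0: omega^gamma * e^(i gamma pi/2),
  with omega^gamma = exp(gamma ln omega) (principal branch).\<close>
definition ipow :: "real \<Rightarrow> complex \<Rightarrow> complex" where
  "ipow \<omega> \<gamma> = exp (\<gamma> * complex_of_real (ln \<omega>)) * exp (\<gamma> * \<i> * complex_of_real pi / 2)"

definition Ehat :: "real \<Rightarrow> real \<Rightarrow> real \<Rightarrow> complex \<Rightarrow> real \<Rightarrow> complex" where
  "Ehat a b \<alpha> \<beta> \<omega> =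
     complex_of_real a * ipow \<omega> (complex_of_real \<alpha>)
     + complex_of_real b * (ipow \<omega> \<beta> + ipow \<omega> (cnj \<beta>))"

end

theory Submission
  imports Defs
begin

(*
  Write omega = exp L. For gamma = x + i y the power (i omega)^gamma has
  modulus exp (x L - y pi/2) and argument y L + x pi/2, so with C = cosh (B pi/2),
  S = sinh (B pi/2) and the phase t = B L

    Re E = a e^(alpha L) cos (alpha pi/2) + 2 b e^(A L) (C cos (A pi/2) cos t + S sin (A pi/2) sin t),
    Im E = a e^(alpha L) sin (alpha pi/2) + 2 b e^(A L) (C sin (A pi/2) cos t - S cos (A pi/2) sin t).

  (i) If A <> alpha, take t an odd multiple of pi with e^((alpha - A) L) tiny: the term
      -2 b C cos (A pi/2) e^(A L) then makes the real part negative.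
  (ii) If A = alpha, both parts are e^(alpha L) times a shifted harmonic K + x cos t + y sin t,
      t ranges over all reals, and such a function is nonnegative iff K >= sqrt (x^2 + y^2).
      This turns the real part condition into the tan-bound and the imaginary part
      condition into the cot-bound; which one is stronger depends on alpha <= 1/2.
  (iii) Since cosh >= 1 and the square roots are >= 1, either bound gives a >= 2 b.
*)

section \<open>Polar form of the fractional powers\<close>

lemma Re_ipow:
  "Re (ipow w (Complex x y)) = exp (x * ln w - y * pi / 2) * cos (y * ln w + x * pi / 2)"
  unfolding ipow_def exp_add[symmetric] Re_exp by (simp add: algebra_simps)

lemma Im_ipow:
  "Im (ipow w (Complex x y)) = exp (x * ln w - y * pi / 2) * sin (y * ln w + x * pi / 2)"
  unfolding ipow_def exp_add[symmetric] Im_exp by (simp add: algebra_simps)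

text \<open>The two conjugate terms combine into \<open>cosh\<close>/\<open>sinh\<close> of \<open>B\<pi>/2\<close>.\<close>

lemma Re_Ehat:
  "Re (Ehat a b \<alpha> (Complex A B) w) = a * exp (\<alpha> * ln w) * cos (\<alpha> * pi / 2)
     + 2 * b * exp (A * ln w) * (cosh (B * pi / 2) * cos (A * pi / 2) * cos (B * ln w)
                                + sinh (B * pi / 2) * sin (A * pi / 2) * sin (B * ln w))"
proof -
  have conj: "cnj (Complex A B) = Complex A (- B)" and real: "complex_of_real \<alpha> = Complex \<alpha> 0"
    by (simp_all add: complex_eq_iff)
  have "exp (A * ln w - B * pi / 2) = exp (A * ln w) * exp (- (B * pi / 2))"
       "exp (A * ln w - (- B) * pi / 2) = exp (A * ln w) * exp (B * pi / 2)"
    by (simp_all add: exp_add[symmetric])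
  then show ?thesis
    unfolding Ehat_def conj real plus_complex.sel times_complex.sel Re_ipow Im_ipow
    by (simp add: cos_add cos_diff cosh_def sinh_def algebra_simps)
qed

lemma Im_Ehat:
  "Im (Ehat a b \<alpha> (Complex A B) w) = a * exp (\<alpha> * ln w) * sin (\<alpha> * pi / 2)
     + 2 * b * exp (A * ln w) * (cosh (B * pi / 2) * sin (A * pi / 2) * cos (B * ln w)
                                - sinh (B * pi / 2) * cos (A * pi / 2) * sin (B * ln w))"
proof -
  have conj: "cnj (Complex A B) = Complex A (- B)" and real: "complex_of_real \<alpha> = Complex \<alpha> 0"
    by (simp_all add: complex_eq_iff)
  have "exp (A * ln w - B * pi / 2) = exp (A * ln w) * exp (- (B * pi / 2))"
       "exp (A * ln w - (- B) * pi / 2) = exp (A * ln w) * exp (B * pi / 2)"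
    by (simp_all add: exp_add[symmetric])
  then show ?thesis
    unfolding Ehat_def conj real plus_complex.sel times_complex.sel Re_ipow Im_ipow
    by (simp add: sin_add sin_diff cosh_def sinh_def algebra_simps)
qed

section \<open>Nonnegativity of shifted harmonics\<close>

text \<open>\<open>K + x cos t + y sin t\<close> oscillates with amplitude \<open>\<surd>(x\<^sup>2 + y\<^sup>2)\<close> around \<open>K\<close>.\<close>

lemma shifted_harmonic_nonneg_iff:
  fixes K x y :: real
  shows "(\<forall>t. K + x * cos t + y * sin t \<ge> 0) \<longleftrightarrow> K \<ge> 0 \<and> x\<^sup>2 + y\<^sup>2 \<le> K\<^sup>2"
proof
  assume nonneg: "\<forall>t. K + x * cos t + y * sin t \<ge> 0"
  define r where "r = sqrt (x\<^sup>2 + y\<^sup>2)"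
  show "K \<ge> 0 \<and> x\<^sup>2 + y\<^sup>2 \<le> K\<^sup>2"
  proof (cases "r = 0")
    case True
    then have "x = 0" "y = 0" by (auto simp: r_def sum_power2_eq_zero_iff)
    with nonneg show ?thesis by auto
  next
    case False
    moreover have "r \<ge> 0" by (simp add: r_def)
    ultimately have "r > 0" by linarith
    moreover have "r\<^sup>2 = x\<^sup>2 + y\<^sup>2" by (simp add: r_def)
    ultimately have r: "r > 0" "r\<^sup>2 = x\<^sup>2 + y\<^sup>2" by blast+
    have "(- x / r)\<^sup>2 + (- y / r)\<^sup>2 = (x\<^sup>2 + y\<^sup>2) / r\<^sup>2"
      by (simp only: power_divide power2_minus add_divide_distrib)
    also have "\<dots> = 1" unfolding r(2)[symmetric] using r(1) by simp
    finally have "(- x / r)\<^sup>2 + (- y / r)\<^sup>2 = 1" .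
    then obtain t where t: "- x / r = cos t" "- y / r = sin t" by (rule sincos_total_2pi)
    text \<open>At the phase opposite to \<open>(x, y)\<close> the harmonic attains its minimum \<open>K - r\<close>.\<close>
    have "K + x * cos t + y * sin t = K - r\<^sup>2 / r"
      unfolding t[symmetric] r(2) by (simp add: power2_eq_square diff_divide_distrib add_divide_distrib)
    also have "\<dots> = K - r" using r(1) by (simp add: power2_eq_square)
    finally have "r \<le> K" using nonneg by (metis diff_ge_0_iff_ge)
    then show ?thesis using r power_mono[of r K 2] by simp
  qed
next
  assume bound: "K \<ge> 0 \<and> x\<^sup>2 + y\<^sup>2 \<le> K\<^sup>2"
  show "\<forall>t. K + x * cos t + y * sin t \<ge> 0"
  proof
    fix t
    text \<open>Cauchy--Schwarz in the plane, in Lagrange's form.\<close>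
    have "(x * cos t + y * sin t)\<^sup>2 + (x * sin t - y * cos t)\<^sup>2 = x\<^sup>2 + y\<^sup>2"
      using sin_cos_squared_add[of t] by algebra
    then have "(x * cos t + y * sin t)\<^sup>2 \<le> K\<^sup>2"
      using bound zero_le_power2[of "x * sin t - y * cos t"] by linarith
    then have "\<bar>x * cos t + y * sin t\<bar> \<le> K" using bound by (metis abs_le_square_iff abs_of_nonneg)
    then show "K + x * cos t + y * sin t \<ge> 0" by linarith
  qed
qed

text \<open>The same criterion, normalised to the shape of the bounds in the theorem:
  for \<open>p, k > 0\<close> the harmonic \<open>p a + p k cos t + y sin t\<close> is nonnegative iff
  \<open>a \<ge> k \<surd>(1 + (y / (p k))\<^sup>2)\<close>.\<close>

lemma scaled_harmonic_nonneg_iff: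
  fixes a k p y :: real
  assumes "p > 0" and "k > 0"
  shows "(\<forall>t. p * a + p * k * cos t + y * sin t \<ge> 0) \<longleftrightarrow> a \<ge> k * sqrt (1 + (y / (p * k))\<^sup>2)"
proof -
  have "k\<^sup>2 * (1 + (y / (p * k))\<^sup>2) = k\<^sup>2 + (y / p)\<^sup>2"
    using assms by (simp add: field_simps power2_eq_square)
  then have rhs: "k * sqrt (1 + (y / (p * k))\<^sup>2) = sqrt (k\<^sup>2 + (y / p)\<^sup>2)"
    using assms by (metis real_sqrt_mult abs_of_pos real_sqrt_abs)
  have "(p * k)\<^sup>2 + y\<^sup>2 \<le> (p * a)\<^sup>2 \<longleftrightarrow> k\<^sup>2 + (y / p)\<^sup>2 \<le> a\<^sup>2"
    using assms by (simp add: power_mult_distrib power_divide field_simps)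
  moreover have "a \<ge> 0 \<and> X \<le> a\<^sup>2 \<longleftrightarrow> sqrt X \<le> a" if "X \<ge> 0" for X
  proof
    assume le: "sqrt X \<le> a"
    have "0 \<le> sqrt X" using that by simp
    then have "a \<ge> 0" using le by linarith
    then show "a \<ge> 0 \<and> X \<le> a\<^sup>2" using le that power_mono[of "sqrt X" a 2] by simp
  qed (use real_le_lsqrt in blast)
  ultimately show ?thesis
    unfolding shifted_harmonic_nonneg_iff rhs using assms by (simp add: zero_le_mult_iff)
qed

section \<open>Part (i): the two orders must agree\<close>

lemma cos_half_pi_pos:
  fixes x :: real
  assumes "\<bar>x\<bar> < 1"
  shows "cos (x * pi / 2) > 0"
proof -
  have "\<bar>x * pi / 2\<bar> = \<bar>x\<bar> * (pi / 2)" by (simp add: abs_mult)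
  also have "\<dots> < pi / 2" using assms by simp
  finally show ?thesis by (intro cos_gt_zero_pi) (auto simp: abs_less_iff)
qed

text \<open>The points \<open>L\<close> where the phase \<open>B L\<close> is an odd multiple of \<open>\<pi>\<close> are unbounded in
  both directions, so among them \<open>exp (d L)\<close> can be made as small as we like.\<close>

lemma odd_phase_with_small_scale:
  fixes B d K :: real
  assumes "B \<noteq> 0" and "d \<noteq> 0" and "K > 0"
  shows "\<exists>L. cos (B * L) = -1 \<and> sin (B * L) = 0 \<and> exp (d * L) < K"
proof -
  obtain n :: nat where n: "- ln K * \<bar>B\<bar> / (\<bar>d\<bar> * pi) < real n"
    using reals_Archimedean2 by blast
  define \<phi> where "\<phi> = (if d * B > 0 then - 1 else 1) * (real (2 * n + 1) * pi)"
  define L where "L = \<phi> / B"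
  have "cos (real (2 * n + 1) * pi) = -1" "sin (real (2 * n + 1) * pi) = 0"
    by (simp_all only: cos_npi sin_npi) simp
  then have "cos (B * L) = -1" "sin (B * L) = 0"
    using assms(1) by (simp_all add: L_def \<phi>_def)
  moreover have "d * L < ln K"
  proof -
    have "d * L = - (\<bar>d\<bar> / \<bar>B\<bar> * (real (2 * n + 1) * pi))"
      using assms(1,2) by (cases "d * B > 0") (auto simp: L_def \<phi>_def abs_if zero_less_mult_iff field_simps)
    moreover have "- ln K < \<bar>d\<bar> / \<bar>B\<bar> * (real n * pi)"
      using n assms by (simp add: field_simps)
    moreover have "\<bar>d\<bar> / \<bar>B\<bar> * (real n * pi) \<le> \<bar>d\<bar> / \<bar>B\<bar> * (real (2 * n + 1) * pi)"
      by (intro mult_left_mono mult_right_mono) auto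
    ultimately show ?thesis by argo
  qed
  then have "exp (d * L) < K" using assms(3) by (metis exp_less_cancel_iff exp_ln)
  ultimately show ?thesis by blast
qed

text \<open>At \<open>\<omega> = exp L\<close> with such a phase,
  \<open>Re (Ehat \<dots>) = exp (A L) (a cos (\<alpha> \<pi>/2) exp ((\<alpha> - A) L) - 2 b cosh (B \<pi>/2) cos (A \<pi>/2))\<close>,
  which is negative once \<open>exp ((\<alpha> - A) L)\<close> is small enough.\<close>

lemma Re_Ehat_nonneg_imp_equal_orders:
  fixes a b \<alpha> A B :: real
  assumes "a > 0" and "b > 0" and "\<bar>\<alpha>\<bar> < 1" and "\<bar>A\<bar> < 1" and "B \<noteq> 0"
    and nonneg: "\<forall>\<omega>>0. Re (Ehat a b \<alpha> (Complex A B) \<omega>) \<ge> 0"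
  shows "A = \<alpha>"
proof (rule ccontr)
  assume "A \<noteq> \<alpha>"
  define q where "q = cos (\<alpha> * pi / 2)"
  define qA where "qA = cos (A * pi / 2)"
  define C where "C = cosh (B * pi / 2)"
  have "q > 0" "qA > 0" using assms(3,4) unfolding q_def qA_def by (simp_all add: cos_half_pi_pos)
  moreover have "C > 0" by (simp add: C_def)
  ultimately have K: "2 * b * C * qA / (a * q) > 0" using assms(1,2) by simp
  obtain L where phase: "cos (B * L) = -1" "sin (B * L) = 0"
    and small: "exp ((\<alpha> - A) * L) < 2 * b * C * qA / (a * q)"
    using odd_phase_with_small_scale[OF assms(5) _ K] \<open>A \<noteq> \<alpha>\<close> by (metis eq_iff_diff_eq_0)
  have "a * q * exp ((\<alpha> - A) * L) < 2 * b * C * qA"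
    using small \<open>q > 0\<close> assms(1) by (simp add: field_simps)
  then have neg: "exp (A * L) * (a * q * exp ((\<alpha> - A) * L) - 2 * b * C * qA) < 0"
    by (simp add: mult_pos_neg)
  have "Re (Ehat a b \<alpha> (Complex A B) (exp L)) = a * exp (\<alpha> * L) * q - 2 * b * exp (A * L) * C * qA"
    unfolding Re_Ehat ln_exp phase q_def qA_def C_def by simp
  also have "\<dots> = exp (A * L) * (a * q * exp ((\<alpha> - A) * L) - 2 * b * C * qA)"
  proof -
    have "exp (\<alpha> * L) = exp (A * L) * exp ((\<alpha> - A) * L)"
      by (simp add: exp_add[symmetric] algebra_simps)
    then show ?thesis by algebra
  qed
  also note neg
  finally show False using nonneg exp_gt_zero[of L] by (meson not_le)
qed

section \<open>Part (ii): the criterion for equal orders\<close>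

lemma all_pos_phase_iff:
  fixes B :: real
  assumes "B \<noteq> 0"
  shows "(\<forall>\<omega>>0. P (B * ln \<omega>)) \<longleftrightarrow> (\<forall>t. P t)"
proof
  assume all: "\<forall>\<omega>>0. P (B * ln \<omega>)"
  show "\<forall>t. P t"
  proof
    fix t
    have "B * ln (exp (t / B)) = t" using assms by simp
    then show "P t" using all exp_gt_zero by metis
  qed
qed simp

text \<open>For \<open>A = \<alpha>\<close> the real part is \<open>\<omega>\<^sup>\<alpha>\<close> times a shifted harmonic in \<open>B ln \<omega>\<close>;
  its nonnegativity is exactly the \<open>tan\<close>-bound.\<close>

lemma Re_Ehat_nonneg_iff:
  fixes a b \<alpha> B :: real
  assumes "b > 0" and "\<bar>\<alpha>\<bar> < 1" and "B \<noteq> 0"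
  shows "(\<forall>\<omega>>0. Re (Ehat a b \<alpha> (Complex \<alpha> B) \<omega>) \<ge> 0) \<longleftrightarrow>
         a \<ge> 2 * b * cosh (B * pi / 2) * sqrt (1 + (tan (\<alpha> * pi / 2) * tanh (B * pi / 2))\<^sup>2)"
proof -
  define q where "q = cos (\<alpha> * pi / 2)"
  define k where "k = 2 * b * cosh (B * pi / 2)"
  define y where "y = 2 * b * sinh (B * pi / 2) * sin (\<alpha> * pi / 2)"
  have "q > 0" using assms(2) unfolding q_def by (rule cos_half_pi_pos)
  have "k > 0" using assms(1) by (simp add: k_def)
  have Re: "Re (Ehat a b \<alpha> (Complex \<alpha> B) \<omega>) =
      exp (\<alpha> * ln \<omega>) * (q * a + q * k * cos (B * ln \<omega>) + y * sin (B * ln \<omega>))" for \<omega>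
    unfolding Re_Ehat q_def k_def y_def by (simp add: algebra_simps)
  have ratio: "y / (q * k) = tan (\<alpha> * pi / 2) * tanh (B * pi / 2)"
    using assms(1) by (simp add: q_def k_def y_def tan_def tanh_def)
  have "(\<forall>\<omega>>0. Re (Ehat a b \<alpha> (Complex \<alpha> B) \<omega>) \<ge> 0) \<longleftrightarrow>
        (\<forall>\<omega>>0. q * a + q * k * cos (B * ln \<omega>) + y * sin (B * ln \<omega>) \<ge> 0)"
    unfolding Re by (simp add: zero_le_mult_iff)
  also have "\<dots> \<longleftrightarrow> (\<forall>t. q * a + q * k * cos t + y * sin t \<ge> 0)"
    by (rule all_pos_phase_iff[OF assms(3), of "\<lambda>t. q * a + q * k * cos t + y * sin t \<ge> 0"])
  also have "\<dots> \<longleftrightarrow> a \<ge> k * sqrt (1 + (y / (q * k))\<^sup>2)"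
    using \<open>q > 0\<close> \<open>k > 0\<close> by (rule scaled_harmonic_nonneg_iff)
  finally show ?thesis unfolding k_def[symmetric] ratio[symmetric] .
qed

lemma Im_Ehat_nonneg_iff:
  fixes a b \<alpha> B :: real
  assumes "b > 0" and "0 < \<alpha>" and "\<alpha> < 2" and "B \<noteq> 0"
  shows "(\<forall>\<omega>>0. Im (Ehat a b \<alpha> (Complex \<alpha> B) \<omega>) \<ge> 0) \<longleftrightarrow>
         a \<ge> 2 * b * cosh (B * pi / 2) * sqrt (1 + (cot (\<alpha> * pi / 2) * tanh (B * pi / 2))\<^sup>2)"
proof -
  define s where "s = sin (\<alpha> * pi / 2)"
  define k where "k = 2 * b * cosh (B * pi / 2)"
  define y where "y = - (2 * b * sinh (B * pi / 2) * cos (\<alpha> * pi / 2))"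
  have "s > 0" using assms(2,3) unfolding s_def by (intro sin_gt_zero) auto
  have "k > 0" using assms(1) by (simp add: k_def)
  have Im: "Im (Ehat a b \<alpha> (Complex \<alpha> B) \<omega>) =
      exp (\<alpha> * ln \<omega>) * (s * a + s * k * cos (B * ln \<omega>) + y * sin (B * ln \<omega>))" for \<omega>
    unfolding Im_Ehat s_def k_def y_def by (simp add: algebra_simps)
  have ratio: "(y / (s * k))\<^sup>2 = (cot (\<alpha> * pi / 2) * tanh (B * pi / 2))\<^sup>2"
    using assms(1) by (simp add: s_def k_def y_def cot_def tanh_def power2_minus mult_ac)
  have "(\<forall>\<omega>>0. Im (Ehat a b \<alpha> (Complex \<alpha> B) \<omega>) \<ge> 0) \<longleftrightarrow>
        (\<forall>\<omega>>0. s * a + s * k * cos (B * ln \<omega>) + y * sin (B * ln \<omega>) \<ge> 0)"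
    unfolding Im by (simp add: zero_le_mult_iff)
  also have "\<dots> \<longleftrightarrow> (\<forall>t. s * a + s * k * cos t + y * sin t \<ge> 0)"
    by (rule all_pos_phase_iff[OF assms(4), of "\<lambda>t. s * a + s * k * cos t + y * sin t \<ge> 0"])
  also have "\<dots> \<longleftrightarrow> a \<ge> k * sqrt (1 + (y / (s * k))\<^sup>2)"
    using \<open>s > 0\<close> \<open>k > 0\<close> by (rule scaled_harmonic_nonneg_iff)
  finally show ?thesis unfolding k_def[symmetric] ratio[symmetric] .
qed

text \<open>On \<open>(0, \<pi>/4]\<close> the tangent is at most \<open>1\<close>, hence dominated by the cotangent;
  on \<open>[\<pi>/4, \<pi>/2)\<close> the roles are exchanged by \<open>\<theta> \<mapsto> \<pi>/2 - \<theta>\<close>.\<close>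

lemma tan_sq_le_cot_sq:
  fixes \<theta> :: real
  assumes "0 < \<theta>" and "\<theta> \<le> pi / 4"
  shows "(tan \<theta>)\<^sup>2 \<le> (cot \<theta>)\<^sup>2"
proof -
  have "0 < tan \<theta>" using assms by (intro tan_gt_zero) auto
  moreover have "tan \<theta> \<le> 1" using assms tan_mono_le[of \<theta> "pi / 4"] by (simp add: tan_45)
  ultimately have "tan \<theta> \<le> cot \<theta>" by (simp add: cot_altdef field_simps mult_le_one)
  then show ?thesis using \<open>0 < tan \<theta>\<close> by (intro power_mono) auto
qed

lemma cot_sq_le_tan_sq:
  fixes \<theta> :: real
  assumes "pi / 4 \<le> \<theta>" and "\<theta> < pi / 2"
  shows "(cot \<theta>)\<^sup>2 \<le> (tan \<theta>)\<^sup>2"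
proof -
  have "cot (pi / 2 - \<theta>) = tan \<theta>" by (simp add: cot_def tan_def sin_diff cos_diff)
  then show ?thesis using tan_sq_le_cot_sq[of "pi / 2 - \<theta>"] assms by (simp add: tan_cot')
qed

lemma sqrt_bound_mono:
  fixes a k X Y :: real
  assumes "k \<ge> 0" and "X\<^sup>2 \<le> Y\<^sup>2" and "a \<ge> k * sqrt (1 + Y\<^sup>2)"
  shows "a \<ge> k * sqrt (1 + X\<^sup>2)"
proof -
  have "k * sqrt (1 + X\<^sup>2) \<le> k * sqrt (1 + Y\<^sup>2)"
    using assms(1,2) by (intro mult_left_mono) auto
  then show ?thesis using assms(3) by linarith
qed

text \<open>Hence the case distinction in the theorem selects the stronger of the two
  bounds, and requiring the selected one is the same as requiring both.\<close>

lemma selected_bound_iff_both: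
  fixes a k T \<alpha> :: real
  assumes "k \<ge> 0" and "0 < \<alpha>" and "\<alpha> < 1"
  shows "((\<alpha> \<le> 1/2 \<longrightarrow> a \<ge> k * sqrt (1 + (cot (\<alpha> * pi / 2) * T)\<^sup>2))
          \<and> (1/2 \<le> \<alpha> \<longrightarrow> a \<ge> k * sqrt (1 + (tan (\<alpha> * pi / 2) * T)\<^sup>2)))
     \<longleftrightarrow> a \<ge> k * sqrt (1 + (tan (\<alpha> * pi / 2) * T)\<^sup>2)
          \<and> a \<ge> k * sqrt (1 + (cot (\<alpha> * pi / 2) * T)\<^sup>2)"
proof (cases "\<alpha> \<le> 1/2")
  case True
  then have "(tan (\<alpha> * pi / 2))\<^sup>2 \<le> (cot (\<alpha> * pi / 2))\<^sup>2"
    using assms by (intro tan_sq_le_cot_sq) auto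
  then have "(tan (\<alpha> * pi / 2) * T)\<^sup>2 \<le> (cot (\<alpha> * pi / 2) * T)\<^sup>2"
    by (simp add: power_mult_distrib mult_right_mono)
  then show ?thesis using True assms(1) sqrt_bound_mono by auto
next
  case False
  then have "(cot (\<alpha> * pi / 2))\<^sup>2 \<le> (tan (\<alpha> * pi / 2))\<^sup>2"
    using assms by (intro cot_sq_le_tan_sq) auto
  then have "(cot (\<alpha> * pi / 2) * T)\<^sup>2 \<le> (tan (\<alpha> * pi / 2) * T)\<^sup>2"
    by (simp add: power_mult_distrib mult_right_mono)
  then show ?thesis using False assms(1) sqrt_bound_mono by auto
qed

text \<open>Since \<open>cosh \<ge> 1\<close> and the square root is at least \<open>1\<close>, every such bound gives \<open>a \<ge> 2b\<close>.\<close>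

lemma cosh_sqrt_bound_imp_ge:
  fixes a b x X :: real
  assumes "b \<ge> 0" and "a \<ge> 2 * b * cosh x * sqrt (1 + X\<^sup>2)"
  shows "a \<ge> 2 * b"
proof -
  have "1 * 1 \<le> cosh x * sqrt (1 + X\<^sup>2)"
    using cosh_real_ge_1[of x] by (intro mult_mono) auto
  then have "2 * b \<le> 2 * b * (cosh x * sqrt (1 + X\<^sup>2))"
    using assms(1) by (simp add: mult_le_cancel_left1)
  then show ?thesis using assms(2) by (simp add: mult.assoc)
qed

lemma Ehat_first_quadrant_iff:
  fixes a b \<alpha> B :: real
  assumes "b > 0" and "0 < \<alpha>" and "\<alpha> < 1" and "B \<noteq> 0"
  shows "(\<forall>\<omega>>0. Re (Ehat a b \<alpha> (Complex \<alpha> B) \<omega>) \<ge> 0 \<and> Im (Ehat a b \<alpha> (Complex \<alpha> B) \<omega>) \<ge> 0)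
     \<longleftrightarrow> ((\<alpha> \<le> 1/2 \<longrightarrow> a \<ge> 2 * b * cosh (B * pi / 2) *
               sqrt (1 + (cot (\<alpha> * pi / 2) * tanh (B * pi / 2))^2))
         \<and> (1/2 \<le> \<alpha> \<longrightarrow> a \<ge> 2 * b * cosh (B * pi / 2) *
               sqrt (1 + (tan (\<alpha> * pi / 2) * tanh (B * pi / 2))^2)))"
proof -
  have "\<bar>\<alpha>\<bar> < 1" "\<alpha> < 2" "2 * b * cosh (B * pi / 2) \<ge> 0" using assms by auto
  have "(\<forall>\<omega>>0. Re (Ehat a b \<alpha> (Complex \<alpha> B) \<omega>) \<ge> 0 \<and> Im (Ehat a b \<alpha> (Complex \<alpha> B) \<omega>) \<ge> 0)
     \<longleftrightarrow> (\<forall>\<omega>>0. Re (Ehat a b \<alpha> (Complex \<alpha> B) \<omega>) \<ge> 0) \<and> (\<forall>\<omega>>0. Im (Ehat a b \<alpha> (Complex \<alpha> B) \<omega>) \<ge> 0)"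
    by blast
  also have "\<dots> \<longleftrightarrow> a \<ge> 2 * b * cosh (B * pi / 2) * sqrt (1 + (tan (\<alpha> * pi / 2) * tanh (B * pi / 2))\<^sup>2)
                  \<and> a \<ge> 2 * b * cosh (B * pi / 2) * sqrt (1 + (cot (\<alpha> * pi / 2) * tanh (B * pi / 2))\<^sup>2)"
    using Re_Ehat_nonneg_iff[OF assms(1) \<open>\<bar>\<alpha>\<bar> < 1\<close> assms(4)]
      Im_Ehat_nonneg_iff[OF assms(1,2) \<open>\<alpha> < 2\<close> assms(4)] by simp
  finally show ?thesis
    using selected_bound_iff_both[OF \<open>2 * b * cosh (B * pi / 2) \<ge> 0\<close> assms(2,3)] by simp
qed

theorem mainTheorem4:
  fixes a b \<alpha> A B :: real
  assumes "a > 0" and "b > 0" and "0 < \<alpha>" and "\<alpha> < 1"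
    and "0 < A" and "A < 1" and "B > 0"
  defines "\<beta> \<equiv> Complex A B"
  shows "((\<forall>\<omega>>0. Re (Ehat a b \<alpha> \<beta> \<omega>) \<ge> 0 \<and> Im (Ehat a b \<alpha> \<beta> \<omega>) \<ge> 0) \<longrightarrow> A = \<alpha>)
    \<and> (A = \<alpha> \<longrightarrow>
         ((\<forall>\<omega>>0. Re (Ehat a b \<alpha> \<beta> \<omega>) \<ge> 0 \<and> Im (Ehat a b \<alpha> \<beta> \<omega>) \<ge> 0) \<longleftrightarrow>
          ((\<alpha> \<le> 1/2 \<longrightarrow> a \<ge> 2 * b * cosh (B * pi / 2) *
               sqrt (1 + (cot (\<alpha> * pi / 2) * tanh (B * pi / 2))^2))
         \<and> (1/2 \<le> \<alpha> \<longrightarrow> a \<ge> 2 * b * cosh (B * pi / 2) *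
               sqrt (1 + (tan (\<alpha> * pi / 2) * tanh (B * pi / 2))^2)))))
    \<and> (((\<alpha> \<le> 1/2 \<longrightarrow> a \<ge> 2 * b * cosh (B * pi / 2) *
               sqrt (1 + (cot (\<alpha> * pi / 2) * tanh (B * pi / 2))^2))
         \<and> (1/2 \<le> \<alpha> \<longrightarrow> a \<ge> 2 * b * cosh (B * pi / 2) *
               sqrt (1 + (tan (\<alpha> * pi / 2) * tanh (B * pi / 2))^2))) \<longrightarrow> a \<ge> 2 * b)"
proof -
  have orders: "\<bar>\<alpha>\<bar> < 1" "\<bar>A\<bar> < 1" and "B \<noteq> 0" using assms by auto
  note part_i = Re_Ehat_nonneg_imp_equal_orders[OF assms(1,2) orders \<open>B \<noteq> 0\<close>]
  note part_ii = Ehat_first_quadrant_iff[OF assms(2,3,4) \<open>B \<noteq> 0\<close>]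
  note part_iii = cosh_sqrt_bound_imp_ge[OF less_imp_le[OF assms(2)]]
  show ?thesis
    unfolding \<beta>_def using part_i part_ii part_iii by (cases "\<alpha> \<le> 1/2") auto
qed

end
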